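(* Let $m\geq 3$ be an integer. For polynomials $x(s)$ and $y(s)$ with complex coefficients such that $x$ is monic of degree $m$ and $\deg y\leq m$, let $p(x,y)(s)=(s^4+2s^2)x(s)+y(s)$. Then \[ \inf\{\alpha(p(x,y)) : x \text{ monic of degree } m,\ \deg y\le m\} = -\infty . \]
   Context: For a polynomial $q$ with complex coefficients, its abscissa is $\alpha(q)=\max\{\Re z : q(z)=0\}$. *)

theory Defs
  imports "HOL-Computational_Algebra.Polynomial" "HOL-Library.Extended_Real"
begin

text \<open>Abscissa of a complex polynomial: the maximal real part of its roots.
  (Only meaningful for nonconstant polynomials.)\<close>
definition abscissa :: "complex poly \<Rightarrow> real" where
  "abscissa q = Max (Re ` {z. poly q z = 0})"

definition pxy :: "complex poly \<Rightarrow> complex poly \<Rightarrow> complex poly" where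
  "pxy x y = [:0, 0, 2, 0, 1:] * x + y"

end

theory Submission
  imports Defs
begin

text \<open>Division with remainder by s^4 + 2 s^2 writes every monic polynomial of degree m + 4 as
  (s^4 + 2 s^2) x(s) + y(s) with x monic of degree m and deg y < 4; since m \<ge> 3 this pair is
  admissible. Taking the polynomial (s - B)^(m + 4), whose only root is B, shows that every real B
  is attained as an abscissa.\<close>

lemma monic_div_monic:
  fixes p d :: "'a::field poly"
  assumes p: "lead_coeff p = 1" and d: "lead_coeff d = 1" and deg: "degree d \<le> degree p"
  shows "lead_coeff (p div d) = 1 \<and> degree (p div d) = degree p - degree d"
proof -
  define q r where "q = p div d" and "r = p mod d"
  have "d \<noteq> 0" "p \<noteq> 0" using p d by auto
  have p_eq: "p = d * q + r" unfolding q_def r_def by (simp add: mult.commute)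
  have r: "r = 0 \<or> degree r < degree d" unfolding r_def using degree_mod_less \<open>d \<noteq> 0\<close> by blast
  have "q \<noteq> 0"
  proof
    assume "q = 0"
    then have "p = r" using p_eq by simp
    then show False using r \<open>p \<noteq> 0\<close> deg by auto
  qed
  then have deg_dq: "degree (d * q) = degree d + degree q"
    using \<open>d \<noteq> 0\<close> by (simp add: degree_mult_eq)
  have "degree p = degree (d * q) \<and> lead_coeff p = lead_coeff (d * q)"
  proof (cases "r = 0")
    case False
    then have "degree r < degree (d * q)" using r deg_dq by simp
    then show ?thesis
      using p_eq degree_add_eq_left lead_coeff_add_le by (metis add.commute)
  qed (use p_eq in simp)
  then show ?thesis using p d deg_dq by (simp add: q_def lead_coeff_mult)
qed

lemma abscissa_linear_power:
  assumes "n > 0"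
  shows "abscissa ([:-c, 1:] ^ n) = Re c"
proof -
  have "{z. poly ([:-c, 1:] ^ n) z = 0} = {c}" using assms by auto
  then show ?thesis unfolding abscissa_def by simp
qed

lemma monic_eq_pxy:
  fixes p :: "complex poly"
  assumes "m \<ge> 3" and "lead_coeff p = 1" and "degree p = m + 4"
  obtains x y where "lead_coeff x = 1" "degree x = m" "degree y \<le> m" "pxy x y = p"
proof
  let ?d = "[:0, 0, 2, 0, 1:] :: complex poly"
  show "lead_coeff (p div ?d) = 1" "degree (p div ?d) = m"
    using monic_div_monic[of p ?d] assms by auto
  show "degree (p mod ?d) \<le> m"
    using degree_mod_less[of ?d p] assms(1) by auto
  show "pxy (p div ?d) (p mod ?d) = p"
    unfolding pxy_def by (metis div_mult_mod_eq mult.commute)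
qed

theorem mainTheorem2:
  fixes m :: nat
  assumes "m \<ge> 3"
  shows "(INF xy \<in> {(x, y). lead_coeff x = 1 \<and> degree x = m \<and> degree y \<le> m}.
            ereal (abscissa (pxy (fst xy) (snd xy)))) = -\<infinity>"
proof (rule ereal_bot)
  fix B :: real
  let ?p = "[:- complex_of_real B, 1:] ^ (m + 4)"
  have "lead_coeff ?p = 1"
    using lead_coeff_power[of "[:- complex_of_real B, 1:]" "m + 4"] by simp
  moreover have "degree ?p = m + 4"
    by (simp add: degree_power_eq)
  ultimately obtain x y where xy: "lead_coeff x = 1" "degree x = m" "degree y \<le> m" "pxy x y = ?p"
    using monic_eq_pxy assms by blast
  have "abscissa (pxy x y) = B"
    using xy(4) abscissa_linear_power[of "m + 4"] by simp
  then show "(INF xy \<in> {(x, y). lead_coeff x = 1 \<and> degree x = m \<and> degree y \<le> m}.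
            ereal (abscissa (pxy (fst xy) (snd xy)))) \<le> ereal B"
    using xy(1-3) by (intro INF_lower2[of "(x, y)"]) auto
qed

end
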